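(* Let $\tilde{N}$, $N_1$, $N_2$ be real symmetric $n\times n$ matrices with spectral norm at most $1$, and suppose that $N_1$ is positive semidefinite and commutes with $N_2$. If $I-\tilde{N}\approx_{\epsilon}I-N_1$ (with $\epsilon\ge 0$), then \[ I-\tfrac{1}{2}(\tilde{N}N_2+N_2\tilde{N})\approx_{\epsilon}I-N_2N_1. \]
   Context: For real symmetric $X,Y$ and $\epsilon\ge0$, $X\approx_\epsilon Y$ means $(1-\epsilon)v^TYv\le v^TXv\le(1+\epsilon)v^TYv$ for all $v\in\mathbb{R}^n$. *)

theory Defs
  imports "HOL-Analysis.Analysis"
begin

definition spec_approx :: "real ^'n^'n \<Rightarrow> real \<Rightarrow> real ^'n^'n \<Rightarrow> bool" where
  "spec_approx X eps Y \<longleftrightarrow>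
     (\<forall>v::real^'n. (1 - eps) * (v \<bullet> (Y *v v)) \<le> v \<bullet> (X *v v)
                 \<and> v \<bullet> (X *v v) \<le> (1 + eps) * (v \<bullet> (Y *v v)))"

definition symmetric_mat :: "real ^'n^'n \<Rightarrow> bool" where
  "symmetric_mat A \<longleftrightarrow> transpose A = A"

definition psd_mat :: "real ^'n^'n \<Rightarrow> bool" where
  "psd_mat A \<longleftrightarrow> symmetric_mat A \<and> (\<forall>v::real^'n. 0 \<le> v \<bullet> (A *v v))"

definition spectral_norm :: "real ^'n^'n \<Rightarrow> real" where
  "spectral_norm A = onorm (\<lambda>x::real^'n. A *v x)"

end

theory Submission
  imports Defs
begin

text \<open>Write \<open>w = N\<^sub>2 v\<close>, \<open>E = \<tilde>N - N\<^sub>1\<close> and \<open>A = I - N\<^sub>1\<close>. By symmetry of the matrices, the two quadratic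
  forms to be compared are \<open>v\<^sup>T v - v\<^sup>T \<tilde>N w\<close> and \<open>v\<^sup>T v - v\<^sup>T N\<^sub>1 w\<close>, so their difference is the bilinear
  form \<open>v\<^sup>T E w\<close>. The hypothesis bounds the quadratic form of \<open>E\<close> by \<open>\<epsilon>\<close> times that of \<open>A\<close>; polarization
  turns this into \<open>|v\<^sup>T E w| \<le> \<epsilon> (v\<^sup>T A v + w\<^sup>T A w) / 2\<close>. Finally \<open>(v - w)\<^sup>T N\<^sub>1 (v - w) \<ge> 0\<close> together
  with \<open>|w| \<le> |v|\<close> gives \<open>(v\<^sup>T A v + w\<^sup>T A w) / 2 \<le> v\<^sup>T v - v\<^sup>T N\<^sub>1 w\<close>.\<close>

lemma symmetric_mat_inner_mulv:
  assumes "symmetric_mat A"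
  shows "x \<bullet> (A *v y) = (A *v x) \<bullet> y"
proof -
  have "x \<bullet> (A *v y) = (x v* A) \<bullet> y" by (simp add: dot_lmul_matrix)
  also have "x v* A = A *v x"
    by (metis assms symmetric_mat_def vector_transpose_matrix)
  finally show ?thesis .
qed

lemma symmetric_mat_diff:
  assumes "symmetric_mat A" and "symmetric_mat B"
  shows "symmetric_mat (A - B)"
  using assms unfolding symmetric_mat_def transpose_def by (simp add: vec_eq_iff)

lemma inner_matrix_matrix_mult_mulv:
  assumes "symmetric_mat A"
  shows "x \<bullet> ((A ** B) *v y) = (A *v x) \<bullet> (B *v y)"
  by (simp add: assms symmetric_mat_inner_mulv flip: matrix_vector_mul_assoc)

lemma norm_mulv_le_spectral_norm: "norm (A *v x) \<le> spectral_norm A * norm x"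
  unfolding spectral_norm_def by (rule onorm) simp

lemma norm_mulv_le_norm:
  assumes "spectral_norm A \<le> 1"
  shows "norm (A *v x) \<le> norm x"
  using norm_mulv_le_spectral_norm[of A x] mult_right_mono[OF assms norm_ge_zero[of x]]
  by simp

lemma spec_approx_iff_abs:
  "spec_approx X eps Y \<longleftrightarrow>
     (\<forall>v. \<bar>v \<bullet> (X *v v) - v \<bullet> (Y *v v)\<bar> \<le> eps * (v \<bullet> (Y *v v)))"
  unfolding spec_approx_def abs_le_iff by (auto simp: algebra_simps)

lemma spec_approx_identity_minus_abs:
  assumes "spec_approx (mat 1 - B) eps (mat 1 - A)"
  shows "\<bar>z \<bullet> ((B - A) *v z)\<bar> \<le> eps * (z \<bullet> ((mat 1 - A) *v z))"
proof -
  have "z \<bullet> ((mat 1 - B) *v z) - z \<bullet> ((mat 1 - A) *v z) = - (z \<bullet> ((B - A) *v z))"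
    by (simp add: matrix_vector_mult_diff_rdistrib inner_diff_right)
  then show ?thesis
    using assms abs_minus_cancel unfolding spec_approx_iff_abs by metis
qed

lemma inner_identity_minus_mult:
  assumes "symmetric_mat B"
  shows "v \<bullet> ((mat 1 - B ** A) *v v) = v \<bullet> v - (A *v v) \<bullet> (B *v v)"
  by (simp add: assms matrix_vector_mult_diff_rdistrib inner_diff_right
      inner_matrix_matrix_mult_mulv inner_commute[of "B *v v"])

lemma inner_identity_minus_symmetrized_mult:
  assumes "symmetric_mat A" and "symmetric_mat B"
  shows "v \<bullet> ((mat 1 - (1/2) *\<^sub>R (A ** B + B ** A)) *v v) = v \<bullet> v - (A *v v) \<bullet> (B *v v)"
proof -
  have "v \<bullet> ((mat 1 - (1/2) *\<^sub>R (A ** B + B ** A)) *v v)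
      = v \<bullet> v - (v \<bullet> ((A ** B) *v v) + v \<bullet> ((B ** A) *v v)) / 2"
    by (simp add: matrix_vector_mult_diff_rdistrib matrix_vector_mult_add_rdistrib
        inner_diff_right inner_add_right flip: scaleR_matrix_vector_assoc)
  moreover have "v \<bullet> ((B ** A) *v v) = (A *v v) \<bullet> (B *v v)"
    by (subst inner_commute) (rule inner_matrix_matrix_mult_mulv[OF assms(2)])
  ultimately show ?thesis
    by (simp add: inner_matrix_matrix_mult_mulv[OF assms(1)])
qed

lemma abs_inner_mulv_le_polarization:
  fixes E A :: "real^'n^'n"
  assumes "symmetric_mat E"
    and quadratic_bound: "\<And>z. \<bar>z \<bullet> (E *v z)\<bar> \<le> c * (z \<bullet> (A *v z))"
  shows "\<bar>x \<bullet> (E *v y)\<bar> \<le> c * (x \<bullet> (A *v x) + y \<bullet> (A *v y)) / 2"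
proof -
  have plus: "(x + y) \<bullet> (M *v (x + y)) = x \<bullet> (M *v x) + x \<bullet> (M *v y) + y \<bullet> (M *v x) + y \<bullet> (M *v y)"
    and minus: "(x - y) \<bullet> (M *v (x - y)) = x \<bullet> (M *v x) - x \<bullet> (M *v y) - y \<bullet> (M *v x) + y \<bullet> (M *v y)"
    for M :: "real^'n^'n"
    by (simp_all add: matrix_vector_right_distrib matrix_vector_mult_diff_distrib
        inner_add_left inner_add_right inner_diff_left inner_diff_right)
  have "y \<bullet> (E *v x) = x \<bullet> (E *v y)"
    by (metis assms(1) symmetric_mat_inner_mulv inner_commute)
  then have "4 * \<bar>x \<bullet> (E *v y)\<bar> = \<bar>(x + y) \<bullet> (E *v (x + y)) - (x - y) \<bullet> (E *v (x - y))\<bar>"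
    by (simp add: plus minus)
  also have "\<dots> \<le> c * ((x + y) \<bullet> (A *v (x + y))) + c * ((x - y) \<bullet> (A *v (x - y)))"
    using quadratic_bound[of "x + y"] quadratic_bound[of "x - y"] by linarith
  also have "\<dots> = 2 * (c * (x \<bullet> (A *v x) + y \<bullet> (A *v y)))"
    by (simp add: plus minus algebra_simps)
  finally show ?thesis
    by simp
qed

lemma psd_quadratic_forms_le:
  assumes "psd_mat N" and "norm w \<le> norm v"
  shows "(v \<bullet> ((mat 1 - N) *v v) + w \<bullet> ((mat 1 - N) *v w)) / 2 \<le> v \<bullet> v - (N *v v) \<bullet> w"
proof -
  have "symmetric_mat N"
    using assms(1) by (simp add: psd_mat_def)
  have "0 \<le> (v - w) \<bullet> (N *v (v - w))"
    using assms(1) by (simp add: psd_mat_def)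
  also have "\<dots> = v \<bullet> (N *v v) - 2 * ((N *v v) \<bullet> w) + w \<bullet> (N *v w)"
    using symmetric_mat_inner_mulv[OF \<open>symmetric_mat N\<close>, of w v]
    by (simp add: matrix_vector_mult_diff_distrib inner_diff_left inner_diff_right inner_commute)
  finally have cross: "0 \<le> v \<bullet> (N *v v) - 2 * ((N *v v) \<bullet> w) + w \<bullet> (N *v w)" .
  have contraction: "w \<bullet> w \<le> v \<bullet> v"
    using assms(2) by (simp add: power_mono flip: power2_norm_eq_inner)
  have form: "x \<bullet> ((mat 1 - N) *v x) = x \<bullet> x - x \<bullet> (N *v x)" for x
    by (simp add: matrix_vector_mult_diff_rdistrib inner_diff_right)
  show ?thesis
    using cross contraction form[of v] form[of w] by argo
qed

theorem mainTheorem8: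
  fixes Nt N1 N2 :: "real ^'n^'n" and eps :: real
  assumes "symmetric_mat Nt" and "symmetric_mat N1" and "symmetric_mat N2"
    and "spectral_norm Nt \<le> 1" and "spectral_norm N1 \<le> 1" and "spectral_norm N2 \<le> 1"
    and "psd_mat N1"
    and "N1 ** N2 = N2 ** N1"
    and "eps \<ge> 0"
    and "spec_approx (mat 1 - Nt) eps (mat 1 - N1)"
  shows "spec_approx (mat 1 - (1/2) *\<^sub>R (Nt ** N2 + N2 ** Nt)) eps (mat 1 - N2 ** N1)"
  unfolding spec_approx_iff_abs
proof
  fix v :: "real^'n"
  define w where "w = N2 *v v"
  have "\<bar>w \<bullet> ((Nt - N1) *v v)\<bar>
      \<le> eps * (w \<bullet> ((mat 1 - N1) *v w) + v \<bullet> ((mat 1 - N1) *v v)) / 2"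
    using symmetric_mat_diff[OF assms(1,2)] spec_approx_identity_minus_abs[OF assms(10)]
    by (rule abs_inner_mulv_le_polarization)
  also have "\<dots> \<le> eps * (v \<bullet> v - (N1 *v v) \<bullet> w)"
    using mult_left_mono[OF psd_quadratic_forms_le[OF assms(7) norm_mulv_le_norm[OF assms(6)]] assms(9)]
    unfolding w_def by (simp only: times_divide_eq_right add.commute)
  moreover have "w \<bullet> ((Nt - N1) *v v) = (Nt *v v) \<bullet> w - (N1 *v v) \<bullet> w"
    by (simp add: matrix_vector_mult_diff_rdistrib inner_diff_right inner_commute)
  ultimately show "\<bar>v \<bullet> ((mat 1 - (1/2) *\<^sub>R (Nt ** N2 + N2 ** Nt)) *v v)
      - v \<bullet> ((mat 1 - N2 ** N1) *v v)\<bar> \<le> eps * (v \<bullet> ((mat 1 - N2 ** N1) *v v))"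
    by (simp add: w_def inner_identity_minus_symmetrized_mult[OF assms(1,3)]
        inner_identity_minus_mult[OF assms(3)] abs_minus_commute)
qed

end
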